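(* Let $k\ge 2$ and $n\ge 3$ be integers. Let $K$ be the graph with vertex set $\{a,b,v_1,\dots,v_{n-1}\}$ in which $v_1,\dots,v_{n-1}$ are pairwise adjacent, $a$ is adjacent exactly to $v_1,\dots,v_{n-2}$, and $b$ is adjacent exactly to $v_{n-1}$. Then for all integers $0\le x,y\le kn-2$, the graph $K$ has a $(kn-1,k)$-coloring $c$ with $c(a)=x$ and $c(b)=y$ if and only if $x\neq y$.
   Context: For positive integers $p,q$, a $(p,q)$-coloring of a graph $G$ is a map $c:V(G)\to\{0,1,\dots,p-1\}$ such that for every edge $xy\in E(G)$ one has $q\le |c(x)-c(y)|\le p-q$. *)

theory Defs
  imports Main
begin

definition pq_coloring :: "nat \<Rightarrow> nat \<Rightarrow> 'v set \<Rightarrow> ('v \<Rightarrow> 'v \<Rightarrow> bool) \<Rightarrow> ('v \<Rightarrow> int) \<Rightarrow> bool" where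
  "pq_coloring p q V E c \<longleftrightarrow>
     (\<forall>x\<in>V. 0 \<le> c x \<and> c x \<le> int p - 1) \<and>
     (\<forall>x\<in>V. \<forall>y\<in>V. E x y \<longrightarrow> int q \<le> \<bar>c x - c y\<bar> \<and> \<bar>c x - c y\<bar> \<le> int p - int q)"

datatype kvert = VA | VB | VV nat

definition K_verts :: "nat \<Rightarrow> kvert set" where
  "K_verts n = {VA, VB} \<union> {VV i | i. 1 \<le> i \<and> i \<le> n - 1}"

fun K_adj0 :: "nat \<Rightarrow> kvert \<Rightarrow> kvert \<Rightarrow> bool" where
  "K_adj0 n (VV i) (VV j) = (i \<noteq> j \<and> 1 \<le> i \<and> i \<le> n - 1 \<and> 1 \<le> j \<and> j \<le> n - 1)"
| "K_adj0 n VA (VV i) = (1 \<le> i \<and> i \<le> n - 2)"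
| "K_adj0 n VB (VV i) = (i = n - 1)"
| "K_adj0 n _ _ = False"

definition K_adj :: "nat \<Rightarrow> kvert \<Rightarrow> kvert \<Rightarrow> bool" where
  "K_adj n x y \<longleftrightarrow> K_adj0 n x y \<or> K_adj0 n y x"

end

(*
  Colours of a (p,q)-colouring can be read in Z/p, where the edge condition says that
  adjacent colours are at cyclic distance at least q; this condition is invariant under
  rotation of Z/p.  Here p = kn - 1 and q = k.

  If c(a) = c(b), merging a and b gives a copy of K_n, and the n arcs [c(v), c(v) + k)
  of its colours would be pairwise disjoint, needing kn > p points.

  Conversely, after rotating it suffices to have c(a) = 0 and c(b) = d for each 0 < d < p.
  Put v_1, ..., v_(n-2) at s + ik and v_(n-1) at s + tk with t = 0 or t = n - 1, taking
  (s, t) = (0, 0) if k <= d <= p - k, (0, n - 1) if d < k, and (k - 1, 0) if d > p - k.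
*)
theory Submission
  imports Defs
begin

definition sep_mod :: "int \<Rightarrow> int \<Rightarrow> int \<Rightarrow> int \<Rightarrow> bool" where
  "sep_mod p q a b \<longleftrightarrow> q \<le> (a - b) mod p \<and> (a - b) mod p \<le> p - q"

lemma sep_mod_commute:
  assumes "0 < q"
  shows "sep_mod p q a b \<longleftrightarrow> sep_mod p q b a"
proof -
  have "(b - a) mod p = (if (a - b) mod p = 0 then 0 else p - (a - b) mod p)"
    using zmod_zminus1_eq_if[of "a - b" p] by simp
  then show ?thesis
    using assms unfolding sep_mod_def by auto
qed

lemma sep_mod_iff_abs:
  assumes "0 < q" "\<bar>a - b\<bar> < p"
  shows "sep_mod p q a b \<longleftrightarrow> q \<le> \<bar>a - b\<bar> \<and> \<bar>a - b\<bar> \<le> p - q"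
proof (cases "b \<le> a")
  case True
  then have "(a - b) mod p = a - b"
    using assms by (intro mod_pos_pos_trivial) auto
  then show ?thesis
    using True unfolding sep_mod_def by auto
next
  case False
  then have "(a - b) mod p = a - b + p"
    using assms by (subst mod_add_self2[symmetric], intro mod_pos_pos_trivial) auto
  then show ?thesis
    using False unfolding sep_mod_def by auto
qed

lemma sep_mod_of_diff:
  assumes "0 < q" "q \<le> a - b" "a - b \<le> p - q"
  shows "sep_mod p q a b"
  using assms by (subst sep_mod_iff_abs) auto

lemma pq_coloring_iff_sep_mod:
  assumes "0 < q"
  shows "pq_coloring p q V E c \<longleftrightarrow>
    (\<forall>x\<in>V. 0 \<le> c x \<and> c x < int p) \<and>
    (\<forall>x\<in>V. \<forall>y\<in>V. E x y \<longrightarrow> sep_mod (int p) (int q) (c x) (c y))"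
proof -
  have "sep_mod (int p) (int q) (c x) (c y) \<longleftrightarrow>
        int q \<le> \<bar>c x - c y\<bar> \<and> \<bar>c x - c y\<bar> \<le> int p - int q"
    if "0 \<le> c x" "c x < int p" "0 \<le> c y" "c y < int p" for x y
    using that assms by (intro sep_mod_iff_abs) auto
  then show ?thesis
    unfolding pq_coloring_def by force
qed

lemma pq_coloring_rotate:
  assumes "0 < q" and c: "pq_coloring p q V E c"
  shows "pq_coloring p q V E (\<lambda>v. (c v + t) mod int p)"
proof -
  have "sep_mod (int p) (int q) ((c x + t) mod int p) ((c y + t) mod int p)
        \<longleftrightarrow> sep_mod (int p) (int q) (c x) (c y)" for x y
    by (simp add: sep_mod_def mod_diff_eq)
  moreover have "0 < int p" if "x \<in> V" for x
    using c that by (auto simp: pq_coloring_iff_sep_mod[OF \<open>0 < q\<close>])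
  ultimately show ?thesis
    using c by (auto simp: pq_coloring_iff_sep_mod[OF \<open>0 < q\<close>])
qed

lemma sep_mod_clique_card_le:
  fixes g :: "'a \<Rightarrow> int"
  assumes "finite S" "0 < q" "q \<le> p"
    and sep: "\<And>i j. i \<in> S \<Longrightarrow> j \<in> S \<Longrightarrow> i \<noteq> j \<Longrightarrow> sep_mod p q (g i) (g j)"
  shows "int (card S) * q \<le> p"
proof -
  define f where "f = (\<lambda>(i, j). (g i + j) mod p)"
  have "inj_on f (S \<times> {0..<q})"
  proof (rule inj_onI, clarify)
    fix i j i' j'
    assume ij: "i \<in> S" "j \<in> {0..<q}" "i' \<in> S" "j' \<in> {0..<q}" and "f (i, j) = f (i', j')"
    then have "(g i + j - j) mod p = (g i' + j' - j) mod p"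
      unfolding f_def by (intro mod_diff_cong) simp_all
    then have "g i mod p = (g i' + (j' - j)) mod p"
      by (simp add: algebra_simps)
    then have "(g i - g i') mod p = (g i' + (j' - j) - g i') mod p"
      by (rule mod_diff_cong) simp
    then have "sep_mod p q (g i) (g i') \<longleftrightarrow> sep_mod p q (j' - j) 0"
      by (simp add: sep_mod_def)
    moreover have "\<not> sep_mod p q (j' - j) 0"
      using ij assms(2,3) by (subst sep_mod_iff_abs) auto
    ultimately have "i = i'"
      using sep ij by blast
    moreover from this have "p dvd j' - j"
      using \<open>g i mod p = _\<close> by (simp add: mod_eq_dvd_iff dvd_diff_commute)
    then have "j = j'"
      using dvd_imp_le_int[of "j' - j" p] ij assms(3) by (cases "j' = j") (auto split: if_split_asm)
    ultimately show "i = i' \<and> j = j'" ..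
  qed
  moreover have "f ` (S \<times> {0..<q}) \<subseteq> {0..<p}"
    using assms(2,3) unfolding f_def by auto
  ultimately have "card (S \<times> {0..<q}) \<le> card {0..<p}"
    by (intro card_inj_on_le) auto
  then have "int (card S * nat q) \<le> int (nat p)"
    by (simp only: card_cartesian_product card_atLeastLessThan_int of_nat_le_iff) simp
  then show ?thesis
    using assms(2,3) by simp
qed

lemma ball_K_verts:
  "(\<forall>v\<in>K_verts n. P v) \<longleftrightarrow> P VA \<and> P VB \<and> (\<forall>i\<in>{1..n - 1}. P (VV i))"
  unfolding K_verts_def by auto

lemma K_pq_coloring_iff:
  assumes "0 < q" "2 \<le> n"
  shows "pq_coloring p q (K_verts n) (K_adj n) c \<longleftrightarrow>
    (\<forall>v\<in>K_verts n. 0 \<le> c v \<and> c v < int p) \<and>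
    (\<forall>i\<in>{1..n - 2}. sep_mod (int p) (int q) (c VA) (c (VV i))) \<and>
    sep_mod (int p) (int q) (c VB) (c (VV (n - 1))) \<and>
    (\<forall>i\<in>{1..n - 1}. \<forall>j\<in>{1..n - 1}. i \<noteq> j \<longrightarrow> sep_mod (int p) (int q) (c (VV i)) (c (VV j)))"
proof -
  let ?sep = "\<lambda>u v. sep_mod (int p) (int q) (c u) (c v)"
  have "(\<forall>u\<in>K_verts n. \<forall>v\<in>K_verts n. K_adj n u v \<longrightarrow> ?sep u v) \<longleftrightarrow>
        (\<forall>u\<in>K_verts n. \<forall>v\<in>K_verts n. K_adj0 n u v \<longrightarrow> ?sep u v)"
    using sep_mod_commute[of "int q"] assms(1) unfolding K_adj_def by (metis of_nat_0_less_iff)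
  also have "\<dots> \<longleftrightarrow>
    (\<forall>i\<in>{1..n - 2}. ?sep VA (VV i)) \<and> ?sep VB (VV (n - 1)) \<and>
    (\<forall>i\<in>{1..n - 1}. \<forall>j\<in>{1..n - 1}. i \<noteq> j \<longrightarrow> ?sep (VV i) (VV j))"
    using assms(2) by (auto simp: ball_K_verts)
  finally show ?thesis
    unfolding pq_coloring_iff_sep_mod[OF assms(1)] by blast
qed

lemma K_pq_coloring_VA_neq_VB:
  assumes "1 \<le> k" "2 \<le> n" and c: "pq_coloring (k * n - 1) k (K_verts n) (K_adj n) c"
  shows "c VA \<noteq> c VB"
proof
  assume same: "c VA = c VB"
  let ?p = "int (k * n - 1)"
  have p_eq: "?p = int k * int n - 1"
    using assms(1,2) by (simp add: of_nat_diff)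
  have "0 < k"
    using assms(1) by simp
  note edges = c[unfolded K_pq_coloring_iff[OF \<open>0 < k\<close> assms(2)]]
  define g where "g i = c (if i = 0 then VA else VV i)" for i
  have sep_g0: "sep_mod ?p (int k) (g 0) (g j)" if "j \<in> {1..n - 1}" for j
    using edges same that unfolding g_def by (cases "j = n - 1") auto
  have "sep_mod ?p (int k) (g i) (g j)" if "i \<in> {0..<n}" "j \<in> {0..<n}" "i \<noteq> j" for i j
  proof (cases "i = 0 \<or> j = 0")
    case True
    then show ?thesis
      using sep_g0[of i] sep_g0[of j] sep_mod_commute[of "int k"] \<open>0 < k\<close> that by auto
  next
    case False
    then show ?thesis
      using edges that unfolding g_def by auto
  qed
  moreover have "int k \<le> ?p"
    using assms(1,2) p_eq by (simp add: nat_mult_le_cancel1)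
  ultimately have "int (card {0..<n}) * int k \<le> ?p"
    using \<open>0 < k\<close> by (intro sep_mod_clique_card_le) auto
  then show False
    using p_eq by (simp add: algebra_simps)
qed

lemma sep_mod_arith_progression:
  fixes p q s a b :: int
  assumes "0 < q" "a \<noteq> b" "\<bar>a - b\<bar> * q \<le> p - q"
  shows "sep_mod p q (s + a * q) (s + b * q)"
proof -
  have "\<bar>s + a * q - (s + b * q)\<bar> = \<bar>a - b\<bar> * q"
    using assms(1) by (simp flip: left_diff_distrib add: abs_mult)
  moreover have "1 * q \<le> \<bar>a - b\<bar> * q"
    using assms(1,2) by (intro mult_right_mono) auto
  ultimately show ?thesis
    using assms by (subst sep_mod_iff_abs) auto
qed

lemma K_pq_coloring_progression:
  fixes k n t :: nat and s d :: int
  defines "c \<equiv> \<lambda>v. case v of VA \<Rightarrow> 0 | VB \<Rightarrow> d | VV i \<Rightarrow> s + int (if i = n - 1 then t else i) * int k"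
  assumes "1 \<le> k" "2 \<le> n" "t = 0 \<or> t = n - 1"
    and "0 \<le> s" "s < int k" "s + int t * int k < int (k * n - 1)"
    and "0 \<le> d" "d < int (k * n - 1)" "sep_mod (int (k * n - 1)) (int k) d (s + int t * int k)"
  shows "pq_coloring (k * n - 1) k (K_verts n) (K_adj n) c"
proof -
  let ?p = "int (k * n - 1)" and ?q = "int k"
  define u where "u i = int (if i = n - 1 then t else i)" for i
  define lo where "lo = (if t = 0 then 0 else 1 :: int)"
  have p_eq: "?p = ?q * int n - 1"
    using assms(2,3) by (simp add: of_nat_diff)
  have "0 < k"
    using assms(2) by simp
  have c_VV: "c (VV i) = s + u i * ?q" for i
    by (simp add: c_def u_def)
  have u_bounds: "lo \<le> u i \<and> u i \<le> lo + int n - 2" if "i \<in> {1..n - 1}" for i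
    using that assms(3,4) unfolding u_def lo_def by auto
  have u_inj: "u i \<noteq> u j" if "i \<in> {1..n - 1}" "j \<in> {1..n - 1}" "i \<noteq> j" for i j
    using that assms(3,4) unfolding u_def by auto
  have mult_le: "a * ?q \<le> ?q * int n - 2 * ?q" if "a \<le> int n - 2" for a
  proof -
    have "a * ?q \<le> (int n - 2) * ?q"
      using that by (intro mult_right_mono) auto
    then show ?thesis
      by (simp add: algebra_simps)
  qed
  have range_VV: "0 \<le> c (VV i) \<and> c (VV i) < ?p" if "i \<in> {1..n - 1}" for i
  proof (cases "i = n - 1")
    case True
    then show ?thesis
      using assms(5,7) by (simp add: c_def)
  next
    case False
    then have "int i * ?q \<le> ?q * int n - 2 * ?q"
      using that by (intro mult_le) auto
    then show ?thesis
      using False assms(5,6) p_eq by (simp add: c_def)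
  qed
  have sep_VA: "sep_mod ?p ?q (c VA) (c (VV i))" if "i \<in> {1..n - 2}" for i
  proof -
    have "i \<noteq> n - 1"
      using that by auto
    then have "c VA = 0" "c (VV i) = s + int i * ?q"
      by (simp_all add: c_def)
    moreover have "1 * ?q \<le> int i * ?q"
      using that by (intro mult_right_mono) auto
    moreover have "int i * ?q \<le> ?q * int n - 2 * ?q"
      using that by (intro mult_le) auto
    ultimately have "sep_mod ?p ?q (c (VV i)) (c VA)"
      unfolding p_eq by (intro sep_mod_of_diff) (use \<open>0 < k\<close> assms(5,6) in linarith)+
    then show ?thesis
      using sep_mod_commute[of ?q] \<open>0 < k\<close> by auto
  qed
  have sep_VV: "sep_mod ?p ?q (c (VV i)) (c (VV j))"
    if "i \<in> {1..n - 1}" "j \<in> {1..n - 1}" "i \<noteq> j" for i j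
  proof -
    have "\<bar>u i - u j\<bar> * ?q \<le> ?q * int n - 2 * ?q"
      using u_bounds[OF that(1)] u_bounds[OF that(2)] by (intro mult_le) auto
    then show ?thesis
      unfolding c_VV using u_inj[OF that] \<open>0 < k\<close> p_eq
      by (intro sep_mod_arith_progression) auto
  qed
  have "c VB = d" "c (VV (n - 1)) = s + int t * ?q"
    by (simp_all add: c_def)
  then show ?thesis
    using range_VV sep_VA sep_VV assms(8,9,10) \<open>0 < k\<close> assms(3)
    by (simp add: K_pq_coloring_iff ball_K_verts) (simp add: c_def)
qed

lemma K_pq_coloring_VA_zero:
  assumes "2 \<le> k" "3 \<le> n" "1 \<le> d" "d < int (k * n - 1)"
  shows "\<exists>c. pq_coloring (k * n - 1) k (K_verts n) (K_adj n) c \<and> c VA = 0 \<and> c VB = d"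
proof -
  let ?p = "int (k * n - 1)" and ?q = "int k"
  have p_eq: "?p = ?q * int n - 1"
    using assms(1,2) by (simp add: of_nat_diff)
  have n1_eq: "int (n - 1) * ?q = ?q * int n - ?q"
    using assms(2) by (simp add: of_nat_diff algebra_simps)
  have d_lt: "d < ?q * int n - 1"
    using assms(4) p_eq by simp
  have kn3: "?q * 3 \<le> ?q * int n"
    using assms(2) by (intro mult_left_mono) auto
  obtain s t where "t = 0 \<or> t = n - 1" "0 \<le> s" "s < ?q" "s + int t * ?q < ?p"
    and "sep_mod ?p ?q d (s + int t * ?q)"
  proof (cases "d < ?q")
    case True
    have "sep_mod ?p ?q (?q * int n - ?q) d"
      unfolding p_eq by (rule sep_mod_of_diff) (use True assms n1_eq kn3 in linarith)+
    then show ?thesis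
      using that[of "n - 1" 0] sep_mod_commute[of ?q] assms n1_eq unfolding p_eq by auto
  next
    case False
    show ?thesis
    proof (cases "d \<le> ?q * int n - 1 - ?q")
      case True
      have "sep_mod ?p ?q d 0"
        unfolding p_eq by (rule sep_mod_of_diff) (use True False assms in linarith)+
      then show ?thesis
        using that[of 0 0] assms unfolding p_eq by auto
    next
      case False
      have "sep_mod ?p ?q d (?q - 1)"
        unfolding p_eq by (rule sep_mod_of_diff) (use False assms(1) d_lt kn3 in linarith)+
      then show ?thesis
        using that[of 0 "?q - 1"] assms unfolding p_eq by auto
    qed
  qed
  then show ?thesis
    using K_pq_coloring_progression[of k n t s d] assms by fastforce
qed

lemma K_pq_coloring_exists:
  assumes "2 \<le> k" "3 \<le> n" "0 \<le> x" "x < int (k * n - 1)" "0 \<le> y" "y < int (k * n - 1)" "x \<noteq> y"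
  shows "\<exists>c. pq_coloring (k * n - 1) k (K_verts n) (K_adj n) c \<and> c VA = x \<and> c VB = y"
proof -
  let ?p = "int (k * n - 1)"
  define d where "d = (y - x) mod ?p"
  have "d \<noteq> 0"
  proof
    assume "d = 0"
    then have "y mod ?p = x mod ?p"
      by (simp add: d_def mod_eq_dvd_iff mod_eq_0_iff_dvd)
    then show False
      using assms(3-7) by (simp add: mod_pos_pos_trivial)
  qed
  moreover have "0 \<le> d" "d < ?p"
    using assms(3,4) by (simp_all add: d_def)
  ultimately have "1 \<le> d" "d < ?p"
    by simp_all
  then obtain c where "pq_coloring (k * n - 1) k (K_verts n) (K_adj n) c" "c VA = 0" "c VB = d"
    using K_pq_coloring_VA_zero[OF assms(1,2)] by blast
  then have "pq_coloring (k * n - 1) k (K_verts n) (K_adj n) (\<lambda>v. (c v + x) mod ?p)"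
    using assms(1) by (intro pq_coloring_rotate) auto
  moreover have "(c VA + x) mod ?p = x" "(c VB + x) mod ?p = y"
    using \<open>c VA = 0\<close> \<open>c VB = d\<close> assms(3-6) by (simp_all add: d_def mod_add_left_eq)
  ultimately show ?thesis
    by blast
qed

theorem lemma3:
  fixes k n :: nat and x y :: int
  assumes "k \<ge> 2" and "n \<ge> 3"
    and "0 \<le> x" and "x \<le> int (k * n) - 2" and "0 \<le> y" and "y \<le> int (k * n) - 2"
  shows "(\<exists>c. pq_coloring (k * n - 1) k (K_verts n) (K_adj n) c \<and> c VA = x \<and> c VB = y)
         \<longleftrightarrow> x \<noteq> y"
proof
  assume "\<exists>c. pq_coloring (k * n - 1) k (K_verts n) (K_adj n) c \<and> c VA = x \<and> c VB = y"
  then show "x \<noteq> y"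
    using K_pq_coloring_VA_neq_VB[of k n] assms(1,2) by fastforce
next
  assume "x \<noteq> y"
  have "int (k * n - 1) = int (k * n) - 1"
    using assms(1,2) by (simp add: of_nat_diff)
  then have "x < int (k * n - 1)" "y < int (k * n - 1)"
    using assms(4,6) by linarith+
  then show "\<exists>c. pq_coloring (k * n - 1) k (K_verts n) (K_adj n) c \<and> c VA = x \<and> c VB = y"
    using K_pq_coloring_exists \<open>x \<noteq> y\<close> assms(1,2,3,5) by blast
qed

end
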